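(* Let $n,r,s,t\in\mathbb N$, let $G_{n,r,s,t}=(V,E,c)$ be the graph described in the context, and let $F\subseteq E$ be functional. Then: (i) Let $i\in[n]$ and $j\in[rs]$. If $b^1_{i,j}\notin F$, $b^1_{i,j'}\in F$ for all $j'>j$, $i\ge reset(F)$, and $B$ is a tree with $B\subseteq\mathcal B_F$, then $b^1_{i,j}$ is an improving switch with respect to $B$. (ii) Let $i\in[n]$, $j\in[r]$, $k\in[s]$. If $a^1_{i,j,k}\notin F$, $a^1_{i,j,k'}\in F$ for all $k'>k$, $i\ge reset(F)$, ${\bf b}^1_i\subseteq F$, and $B$ is a tree with $B\subseteq\mathcal B_F$, then $a^1_{i,j,k}$ is an improving switch with respect to $B$.
   Context: A tree is a set $B\subseteq E$ containing exactly one outgoing edge from every vertex other than the target $\mathsf t$; $y_B(v)$ is the cost of the path from $v$ to $\mathsf t$ in $B$; an edge $(u,v)$ is an improving switch with respect to $B$ if $c(u,v)+y_B(v)<y_B(u)$. The graph $G_{n,r,s,t}$. Let $[m]=\{1,\dots,m\}$ and $\epsilon=1/(rs)$. Vertices: a target $\mathsf t$ (also denoted $u_{n+1}$ and $w_{n+1}$), $u_i,w_i$ for $i\in[n]$, $a_{i,j,k}$ for $i\in[n],j\in[r],k\in[s]$, and $b_{i,j}$ for $i\in[n],j\in[rs]$. Edges (for all $i\in[n]$; "$t$ copies" means $t$ parallel edges indexed by $\ell\in[t]$): - $a^1_{i,j,k}:a_{i,j,k}\to a_{i,j,k+1}$, cost $0$ ($j\in[r],k\in[s-1]$); $a^1_{i,j,s}:a_{i,j,s}\to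 b_{i,1}$, cost $0$; - $a^{0,\ell}_{i,j,k}:a_{i,j,k}\to u_{i+1}$, cost $2^{2i+1}+(k-1)\epsilon$, $t$ copies ($j\in[r],k\in[s]$); - $b^1_{i,j}:b_{i,j}\to b_{i,j+1}$, cost $0$ ($j\in[rs-1]$); $b^1_{i,rs}:b_{i,rs}\to w_{i+1}$, cost $0$; - $b^{0,\ell}_{i,j}:b_{i,j}\to u_{i+1}$, cost $2^{2i+1}+1+(j-1)\epsilon$, $t$ copies ($j\in[rs]$); - $u^{1,\ell}_i:u_i\to b_{i,1}$, cost $0$, $t$ copies; $u^{0,\ell}_i:u_i\to u_{i+1}$, cost $2^{2i}$, $t$ copies; - $w^{j,\ell}_i:w_i\to a_{i,j,1}$, cost $0$, $t$ copies for each $j\in[r]$; $w^{0,\ell}_i:w_i\to w_{i+1}$, cost $2^{2i}$, $t$ copies. Edge groups: ${\bf a}^1_{i,j}=\{a^1_{i,j,k}:k\in[s]\}$, ${\bf a}^0_{i,j,k}=\{a^{0,\ell}_{i,j,k}:\ell\in[t]\}$, ${\bf b}^1_i=\{b^1_{i,j}:j\in[rs]\}$, ${\bf b}^0_{i,j}=\{b^{0,\ell}_{i,j}:\ell\in[t]\}$, ${\bf u}^1_i=\{u^{1,\ell}_i\}_\ell$, ${\bf u}^0_i=\{u^{0,\ell}_i\}_\ell$, ${\bf w}^j_i=\{w^{j,\ell}_i\}_\ell$ ($j\in[r]$), ${\bf w}^0_i=\{w^{0,\ell}_i\}_\ell$. The multi-edges are the sets ${\bf u}^1_i,{\bf u}^0_i,{\bf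 w}^0_i,{\bf b}^0_{i,j},{\bf a}^0_{i,j,k},{\bf w}^j_i$. A set $F\subseteq E$ is functional if it intersects every multi-edge. Write ${\bf a}^1_i\sqsubseteq F$ if ${\bf a}^1_{i,j}\subseteq F$ for some $j\in[r]$. Define $last({\bf b}^1_i,F)=\max(\{0\}\cup\{j\in[rs]:b^1_{i,j}\notin F\})$, $last({\bf a}^1_{i,j},F)=\max(\{0\}\cup\{k\in[s]:a^1_{i,j,k}\notin F\})$, and $reset(F)=\max(\{0\}\cup\{i\in[n]:{\bf b}^1_i\subseteq F\text{ and not }{\bf a}^1_i\sqsubseteq F\})$. For functional $F$, $\mathcal B_F\subseteq F$ consists exactly of the following edges: (i) for each $i>reset(F)$ with ${\bf b}^1_i\subseteq F$: all $b^1_{i,j}$ ($j\in[rs]$); for $j\in[r],k\in[s]$: $a^1_{i,j,k}$ if $k>last({\bf a}^1_{i,j},F)$, and ${\bf a}^0_{i,j,k}\cap F$ otherwise; ${\bf u}^1_i\cap F$; ${\bf w}^j_i\cap F$ for every $j$ with ${\bf a}^1_{i,j}\subseteq F$. (ii) for each $i>reset(F)$ with ${\bf b}^1_i\not\subseteq F$: for $j\in[rs]$: $b^1_{i,j}$ if $j>last({\bf b}^1_i,F)$, and ${\bf b}^0_{i,j}\cap F$ otherwise; ${\bf a}^0_{i,j,k}\cap F$ for all $j,k$; ${\bf u}^0_i\cap F$; ${\bf w}^0_i\cap F$. (iii) for $i=reset(F)$ (if $\ge1$): all $b^1_{i,j}$; for $j\in[r],k\in[s]$: $a^1_{i,j,k}$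 if $k>last({\bf a}^1_{i,j},F)$, and ${\bf a}^0_{i,j,k}\cap F$ otherwise; ${\bf u}^1_i\cap F$; ${\bf w}^0_i\cap F$. (iv) for each $i<reset(F)$: ${\bf b}^0_{i,j}\cap F$ for all $j\in[rs]$; ${\bf a}^0_{i,j,k}\cap F$ for all $j,k$; ${\bf u}^0_i\cap F$; ${\bf w}^j_i\cap F$ for all $j\in[r]$. *)

theory Defs
  imports Main "HOL.Real"
begin

text \<open>Vertices. T is the target t (= u_{n+1} = w_{n+1}).
  A i j k = a_{i,j,k}, Bv i j = b_{i,j}.\<close>
datatype vertex = T | U nat | W nat | A nat nat nat | Bv nat nat

text \<open>Edges (parallel copies carry an explicit copy index l):
  Ea1 i j k = a^1_{i,j,k}, Ea0 i j k l = a^{0,l}_{i,j,k}, Eb1 i j = b^1_{i,j},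
  Eb0 i j l = b^{0,l}_{i,j}, Eu1 i l = u^{1,l}_i, Eu0 i l = u^{0,l}_i,
  Ew i j l = w^{j,l}_i, Ew0 i l = w^{0,l}_i.\<close>
datatype edge = Ea1 nat nat nat | Ea0 nat nat nat nat | Eb1 nat nat | Eb0 nat nat nat
  | Eu1 nat nat | Eu0 nat nat | Ew nat nat nat | Ew0 nat nat

definition uN :: "nat \<Rightarrow> nat \<Rightarrow> vertex" where
  "uN n i = (if i = Suc n then T else U i)"
definition wN :: "nat \<Rightarrow> nat \<Rightarrow> vertex" where
  "wN n i = (if i = Suc n then T else W i)"

definition Vset :: "nat \<Rightarrow> nat \<Rightarrow> nat \<Rightarrow> vertex set" where
  "Vset n r s = {T} \<union> {U i | i. i \<in> {1..n}} \<union> {W i | i. i \<in> {1..n}}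
     \<union> {A i j k | i j k. i \<in> {1..n} \<and> j \<in> {1..r} \<and> k \<in> {1..s}}
     \<union> {Bv i j | i j. i \<in> {1..n} \<and> j \<in> {1..r*s}}"

definition Eset :: "nat \<Rightarrow> nat \<Rightarrow> nat \<Rightarrow> nat \<Rightarrow> edge set" where
  "Eset n r s t =
     {Ea1 i j k | i j k. i \<in> {1..n} \<and> j \<in> {1..r} \<and> k \<in> {1..s}}
   \<union> {Ea0 i j k l | i j k l. i \<in> {1..n} \<and> j \<in> {1..r} \<and> k \<in> {1..s} \<and> l \<in> {1..t}}
   \<union> {Eb1 i j | i j. i \<in> {1..n} \<and> j \<in> {1..r*s}}
   \<union> {Eb0 i j l | i j l. i \<in> {1..n} \<and> j \<in> {1..r*s} \<and> l \<in> {1..t}}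
   \<union> {Eu1 i l | i l. i \<in> {1..n} \<and> l \<in> {1..t}}
   \<union> {Eu0 i l | i l. i \<in> {1..n} \<and> l \<in> {1..t}}
   \<union> {Ew i j l | i j l. i \<in> {1..n} \<and> j \<in> {1..r} \<and> l \<in> {1..t}}
   \<union> {Ew0 i l | i l. i \<in> {1..n} \<and> l \<in> {1..t}}"

fun src :: "edge \<Rightarrow> vertex" where
  "src (Ea1 i j k) = A i j k"
| "src (Ea0 i j k l) = A i j k"
| "src (Eb1 i j) = Bv i j"
| "src (Eb0 i j l) = Bv i j"
| "src (Eu1 i l) = U i"
| "src (Eu0 i l) = U i"
| "src (Ew i j l) = W i"
| "src (Ew0 i l) = W i"

fun tgt :: "nat \<Rightarrow> nat \<Rightarrow> nat \<Rightarrow> edge \<Rightarrow> vertex" where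
  "tgt n r s (Ea1 i j k) = (if k < s then A i j (Suc k) else Bv i 1)"
| "tgt n r s (Ea0 i j k l) = uN n (Suc i)"
| "tgt n r s (Eb1 i j) = (if j < r*s then Bv i (Suc j) else wN n (Suc i))"
| "tgt n r s (Eb0 i j l) = uN n (Suc i)"
| "tgt n r s (Eu1 i l) = Bv i 1"
| "tgt n r s (Eu0 i l) = uN n (Suc i)"
| "tgt n r s (Ew i j l) = A i j 1"
| "tgt n r s (Ew0 i l) = wN n (Suc i)"

definition eps :: "nat \<Rightarrow> nat \<Rightarrow> real" where
  "eps r s = 1 / (real r * real s)"

fun cost :: "nat \<Rightarrow> nat \<Rightarrow> edge \<Rightarrow> real" where
  "cost r s (Ea1 i j k) = 0"
| "cost r s (Ea0 i j k l) = 2 ^ (2*i+1) + (real k - 1) * eps r s"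
| "cost r s (Eb1 i j) = 0"
| "cost r s (Eb0 i j l) = 2 ^ (2*i+1) + 1 + (real j - 1) * eps r s"
| "cost r s (Eu1 i l) = 0"
| "cost r s (Eu0 i l) = 2 ^ (2*i)"
| "cost r s (Ew i j l) = 0"
| "cost r s (Ew0 i l) = 2 ^ (2*i)"

definition is_tree :: "nat \<Rightarrow> nat \<Rightarrow> nat \<Rightarrow> nat \<Rightarrow> edge set \<Rightarrow> bool" where
  "is_tree n r s t B \<longleftrightarrow> B \<subseteq> Eset n r s t \<and>
     (\<forall>v \<in> Vset n r s - {T}. \<exists>!e. e \<in> B \<and> src e = v)"

inductive path_cost :: "nat \<Rightarrow> nat \<Rightarrow> nat \<Rightarrow> edge set \<Rightarrow> vertex \<Rightarrow> real \<Rightarrow> bool"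
  for n r s B where
  pc_T: "path_cost n r s B T 0"
| pc_step: "e \<in> B \<Longrightarrow> src e = v \<Longrightarrow> path_cost n r s B (tgt n r s e) c
            \<Longrightarrow> path_cost n r s B v (cost r s e + c)"

definition yB :: "nat \<Rightarrow> nat \<Rightarrow> nat \<Rightarrow> edge set \<Rightarrow> vertex \<Rightarrow> real" where
  "yB n r s B v = (THE c. path_cost n r s B v c)"

definition improving :: "nat \<Rightarrow> nat \<Rightarrow> nat \<Rightarrow> nat \<Rightarrow> edge set \<Rightarrow> edge \<Rightarrow> bool" where
  "improving n r s t B e \<longleftrightarrow> e \<in> Eset n r s t \<and>
     cost r s e + yB n r s B (tgt n r s e) < yB n r s B (src e)"

definition a1grp :: "nat \<Rightarrow> nat \<Rightarrow> nat \<Rightarrow> edge set" where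
  "a1grp s i j = {Ea1 i j k | k. k \<in> {1..s}}"
definition a0grp :: "nat \<Rightarrow> nat \<Rightarrow> nat \<Rightarrow> nat \<Rightarrow> edge set" where
  "a0grp t i j k = {Ea0 i j k l | l. l \<in> {1..t}}"
definition b1grp :: "nat \<Rightarrow> nat \<Rightarrow> nat \<Rightarrow> edge set" where
  "b1grp r s i = {Eb1 i j | j. j \<in> {1..r*s}}"
definition b0grp :: "nat \<Rightarrow> nat \<Rightarrow> nat \<Rightarrow> edge set" where
  "b0grp t i j = {Eb0 i j l | l. l \<in> {1..t}}"
definition u1grp :: "nat \<Rightarrow> nat \<Rightarrow> edge set" where
  "u1grp t i = {Eu1 i l | l. l \<in> {1..t}}"
definition u0grp :: "nat \<Rightarrow> nat \<Rightarrow> edge set" where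
  "u0grp t i = {Eu0 i l | l. l \<in> {1..t}}"
definition wgrp :: "nat \<Rightarrow> nat \<Rightarrow> nat \<Rightarrow> edge set" where
  "wgrp t i j = {Ew i j l | l. l \<in> {1..t}}"
definition w0grp :: "nat \<Rightarrow> nat \<Rightarrow> edge set" where
  "w0grp t i = {Ew0 i l | l. l \<in> {1..t}}"

definition multi_edges :: "nat \<Rightarrow> nat \<Rightarrow> nat \<Rightarrow> nat \<Rightarrow> edge set set" where
  "multi_edges n r s t =
     {u1grp t i | i. i \<in> {1..n}} \<union> {u0grp t i | i. i \<in> {1..n}} \<union> {w0grp t i | i. i \<in> {1..n}}
   \<union> {b0grp t i j | i j. i \<in> {1..n} \<and> j \<in> {1..r*s}}
   \<union> {a0grp t i j k | i j k. i \<in> {1..n} \<and> j \<in> {1..r} \<and> k \<in> {1..s}}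
   \<union> {wgrp t i j | i j. i \<in> {1..n} \<and> j \<in> {1..r}}"

definition functional :: "nat \<Rightarrow> nat \<Rightarrow> nat \<Rightarrow> nat \<Rightarrow> edge set \<Rightarrow> bool" where
  "functional n r s t F \<longleftrightarrow> F \<subseteq> Eset n r s t \<and> (\<forall>M \<in> multi_edges n r s t. M \<inter> F \<noteq> {})"

text \<open>a1_sq s r F i corresponds to a^1_i \<sqsubseteq> F.\<close>
definition a1_sq :: "nat \<Rightarrow> nat \<Rightarrow> edge set \<Rightarrow> nat \<Rightarrow> bool" where
  "a1_sq r s F i \<longleftrightarrow> (\<exists>j \<in> {1..r}. a1grp s i j \<subseteq> F)"

definition last_b :: "nat \<Rightarrow> nat \<Rightarrow> edge set \<Rightarrow> nat \<Rightarrow> nat" where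
  "last_b r s F i = Max ({0} \<union> {j \<in> {1..r*s}. Eb1 i j \<notin> F})"

definition last_a :: "nat \<Rightarrow> edge set \<Rightarrow> nat \<Rightarrow> nat \<Rightarrow> nat" where
  "last_a s F i j = Max ({0} \<union> {k \<in> {1..s}. Ea1 i j k \<notin> F})"

definition reset :: "nat \<Rightarrow> nat \<Rightarrow> nat \<Rightarrow> edge set \<Rightarrow> nat" where
  "reset n r s F = Max ({0} \<union> {i \<in> {1..n}. b1grp r s i \<subseteq> F \<and> \<not> a1_sq r s F i})"

definition a_part :: "nat \<Rightarrow> nat \<Rightarrow> nat \<Rightarrow> edge set \<Rightarrow> nat \<Rightarrow> edge set" where
  "a_part r s t F i =
     {Ea1 i j k | j k. j \<in> {1..r} \<and> k \<in> {1..s} \<and> k > last_a s F i j}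
   \<union> (\<Union>{a0grp t i j k \<inter> F | j k. j \<in> {1..r} \<and> k \<in> {1..s} \<and> k \<le> last_a s F i j})"

definition all_a0 :: "nat \<Rightarrow> nat \<Rightarrow> nat \<Rightarrow> edge set \<Rightarrow> nat \<Rightarrow> edge set" where
  "all_a0 r s t F i = \<Union>{a0grp t i j k \<inter> F | j k. j \<in> {1..r} \<and> k \<in> {1..s}}"

definition BF_level :: "nat \<Rightarrow> nat \<Rightarrow> nat \<Rightarrow> nat \<Rightarrow> edge set \<Rightarrow> nat \<Rightarrow> edge set" where
  "BF_level n r s t F i =
    (if i > reset n r s F \<and> b1grp r s i \<subseteq> F then
       b1grp r s i \<union> a_part r s t F i \<union> (u1grp t i \<inter> F)
       \<union> \<Union>{wgrp t i j \<inter> F | j. j \<in> {1..r} \<and> a1grp s i j \<subseteq> F}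
     else if i > reset n r s F then
       {Eb1 i j | j. j \<in> {1..r*s} \<and> j > last_b r s F i}
       \<union> \<Union>{b0grp t i j \<inter> F | j. j \<in> {1..r*s} \<and> j \<le> last_b r s F i}
       \<union> all_a0 r s t F i \<union> (u0grp t i \<inter> F) \<union> (w0grp t i \<inter> F)
     else if i = reset n r s F then
       b1grp r s i \<union> a_part r s t F i \<union> (u1grp t i \<inter> F) \<union> (w0grp t i \<inter> F)
     else
       \<Union>{b0grp t i j \<inter> F | j. j \<in> {1..r*s}}
       \<union> all_a0 r s t F i \<union> (u0grp t i \<inter> F)
       \<union> \<Union>{wgrp t i j \<inter> F | j. j \<in> {1..r}})"

definition BF :: "nat \<Rightarrow> nat \<Rightarrow> nat \<Rightarrow> nat \<Rightarrow> edge set \<Rightarrow> edge set" where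
  "BF n r s t F = (\<Union>i \<in> {1..n}. BF_level n r s t F i)"

end

theory Submission
  imports Defs
begin

(* In a tree B inside \<B>_F, the a- and b-chains of a level i \<ge> reset(F) are followed at cost 0
   up to w_{i+1}, and a downward induction on the level shows y_B(w_i) = y_B(u_i) above reset(F):
   both u_i and w_i either enter the zero-cost chains of level i or pay 2^{2i} to the next level.
   So an edge a^1_{i,j,k} or b^1_{i,j} missing from F leads to a vertex of value y_B(u_{i+1}),
   whereas B leaves its source through a parallel 0-edge into u_{i+1}, of positive cost. *)

section \<open>Values of trees\<close>

fun level :: "nat \<Rightarrow> vertex \<Rightarrow> nat" where
  "level n T = Suc n"
| "level n (U i) = i"
| "level n (W i) = i"
| "level n (A i j k) = i"
| "level n (Bv i j) = i"

fun offset :: "nat \<Rightarrow> nat \<Rightarrow> vertex \<Rightarrow> nat" where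
  "offset r s T = 0"
| "offset r s (U i) = r*s + s + 2"
| "offset r s (W i) = r*s + s + 2"
| "offset r s (A i j k) = r*s + 1 + s - k"
| "offset r s (Bv i j) = r*s + 1 - j"

(* Every edge either climbs a level or stays on its level and lowers the offset, so rank is a
   potential that strictly decreases along edges: the graph is acyclic. *)
definition rank :: "nat \<Rightarrow> nat \<Rightarrow> nat \<Rightarrow> vertex \<Rightarrow> nat" where
  "rank n r s v = (Suc n - level n v) * (r*s + s + 3) + offset r s v"

lemma offset_less: "offset r s v < r*s + s + 3"
  by (cases v) auto

lemma rank_less:
  assumes "level n v < level n w \<and> level n w \<le> Suc n
           \<or> level n v = level n w \<and> offset r s w < offset r s v"
  shows "rank n r s w < rank n r s v"
  using assms
proof
  define M where "M = r*s + s + 3"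
  assume "level n v < level n w \<and> level n w \<le> Suc n"
  then have "Suc (Suc n - level n w) * M \<le> (Suc n - level n v) * M"
    by (intro mult_le_mono1) linarith
  moreover have "offset r s w < M" using offset_less M_def by simp
  ultimately show ?thesis unfolding rank_def M_def[symmetric] by simp
qed (simp add: rank_def)

lemma mem_Vset:
  "T \<in> Vset n r s"
  "U i \<in> Vset n r s \<longleftrightarrow> i \<in> {1..n}"
  "W i \<in> Vset n r s \<longleftrightarrow> i \<in> {1..n}"
  "A i j k \<in> Vset n r s \<longleftrightarrow> i \<in> {1..n} \<and> j \<in> {1..r} \<and> k \<in> {1..s}"
  "Bv i j \<in> Vset n r s \<longleftrightarrow> i \<in> {1..n} \<and> j \<in> {1..r*s}"
  unfolding Vset_def by auto

lemma mem_Eset: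
  "Ea1 i j k \<in> Eset n r s t \<longleftrightarrow> i \<in> {1..n} \<and> j \<in> {1..r} \<and> k \<in> {1..s}"
  "Ea0 i j k l \<in> Eset n r s t \<longleftrightarrow> i \<in> {1..n} \<and> j \<in> {1..r} \<and> k \<in> {1..s} \<and> l \<in> {1..t}"
  "Eb1 i j \<in> Eset n r s t \<longleftrightarrow> i \<in> {1..n} \<and> j \<in> {1..r*s}"
  "Eb0 i j l \<in> Eset n r s t \<longleftrightarrow> i \<in> {1..n} \<and> j \<in> {1..r*s} \<and> l \<in> {1..t}"
  "Eu1 i l \<in> Eset n r s t \<longleftrightarrow> i \<in> {1..n} \<and> l \<in> {1..t}"
  "Eu0 i l \<in> Eset n r s t \<longleftrightarrow> i \<in> {1..n} \<and> l \<in> {1..t}"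
  "Ew i j l \<in> Eset n r s t \<longleftrightarrow> i \<in> {1..n} \<and> j \<in> {1..r} \<and> l \<in> {1..t}"
  "Ew0 i l \<in> Eset n r s t \<longleftrightarrow> i \<in> {1..n} \<and> l \<in> {1..t}"
  unfolding Eset_def by auto

lemma level_uN: "i \<le> n \<Longrightarrow> level n (uN n (Suc i)) = Suc i"
  by (auto simp: uN_def)

lemma level_wN: "i \<le> n \<Longrightarrow> level n (wN n (Suc i)) = Suc i"
  by (auto simp: wN_def)

lemma rank_tgt_less_rank_src:
  assumes "e \<in> Eset n r s t"
  shows "rank n r s (tgt n r s e) < rank n r s (src e)"
  using assms by (cases e) (auto intro!: rank_less simp: mem_Eset level_uN level_wN)

lemma src_neq_T: "src e \<noteq> T"
  by (cases e) auto

lemma src_in_Vset: "e \<in> Eset n r s t \<Longrightarrow> src e \<in> Vset n r s - {T}"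
  by (cases e) (auto simp: mem_Eset mem_Vset)

lemma tgt_in_Vset: "e \<in> Eset n r s t \<Longrightarrow> 1 \<le> r \<Longrightarrow> 1 \<le> s \<Longrightarrow> tgt n r s e \<in> Vset n r s"
  by (cases e) (auto simp: mem_Eset mem_Vset uN_def wN_def)

lemma is_tree_subset_Eset: "is_tree n r s t B \<Longrightarrow> B \<subseteq> Eset n r s t"
  unfolding is_tree_def by blast

lemma is_tree_ex1_out_edge:
  "is_tree n r s t B \<Longrightarrow> v \<in> Vset n r s - {T} \<Longrightarrow> \<exists>!e. e \<in> B \<and> src e = v"
  unfolding is_tree_def by (elim conjE bspec)

lemma is_tree_out_edge:
  "is_tree n r s t B \<Longrightarrow> v \<in> Vset n r s - {T} \<Longrightarrow> \<exists>e \<in> B. src e = v"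
  using is_tree_ex1_out_edge by (metis ex1_implies_ex)

lemma is_tree_out_edge_unique:
  assumes "is_tree n r s t B" "e \<in> B" "e' \<in> B" "src e = src e'"
  shows "e = e'"
proof -
  have "src e \<in> Vset n r s - {T}"
    using assms(1,2) is_tree_subset_Eset src_in_Vset by blast
  with assms show ?thesis using is_tree_ex1_out_edge by metis
qed

lemma path_cost_unique:
  assumes tree: "is_tree n r s t B"
  shows "path_cost n r s B v c \<Longrightarrow> path_cost n r s B v c' \<Longrightarrow> c = c'"
proof (induction v c arbitrary: c' rule: path_cost.induct)
  case pc_T
  then show ?case by (cases rule: path_cost.cases) (auto simp: src_neq_T)
next
  case (pc_step e v c)
  from pc_step.prems show ?case
  proof (cases rule: path_cost.cases)
    case pc_T
    then show ?thesis using pc_step.hyps(2) src_neq_T by simp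
  next
    case (pc_step e' c'')
    then have "e' = e" using is_tree_out_edge_unique[OF tree] pc_step.hyps(1,2) by metis
    then show ?thesis using pc_step.IH pc_step by simp
  qed
qed

lemma path_cost_exists:
  assumes tree: "is_tree n r s t B" and "1 \<le> r" "1 \<le> s"
  shows "v \<in> Vset n r s \<Longrightarrow> \<exists>c. path_cost n r s B v c"
proof (induction v rule: measure_induct_rule[where f = "rank n r s"])
  case (less v)
  show ?case
  proof (cases "v = T")
    case True
    then show ?thesis using pc_T by blast
  next
    case False
    then obtain e where e: "e \<in> B" "src e = v"
      using is_tree_out_edge[OF tree] less.prems by blast
    have "e \<in> Eset n r s t" using e(1) is_tree_subset_Eset[OF tree] by blast
    then obtain c where "path_cost n r s B (tgt n r s e) c"
      using less.IH rank_tgt_less_rank_src tgt_in_Vset assms(2,3) e(2) by blast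
    then show ?thesis using pc_step[OF e] by blast
  qed
qed

lemma yB_eqI: "is_tree n r s t B \<Longrightarrow> path_cost n r s B v c \<Longrightarrow> yB n r s B v = c"
  unfolding yB_def using path_cost_unique by blast

lemma yB_src:
  assumes tree: "is_tree n r s t B" and "1 \<le> r" "1 \<le> s" and e: "e \<in> B"
  shows "yB n r s B (src e) = cost r s e + yB n r s B (tgt n r s e)"
proof -
  have "e \<in> Eset n r s t" using e is_tree_subset_Eset[OF tree] by blast
  then obtain c where c: "path_cost n r s B (tgt n r s e) c"
    using path_cost_exists[OF tree assms(2,3)] tgt_in_Vset assms(2,3) by blast
  then have "path_cost n r s B (src e) (cost r s e + c)" using pc_step[OF e refl] by blast
  then show ?thesis using yB_eqI[OF tree] c by simp
qed

section \<open>The edges of \<open>\<B>\<^sub>F\<close>\<close>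

lemma last_a_less:
  "1 \<le> k \<Longrightarrow> (\<forall>k'. k \<le> k' \<and> k' \<le> s \<longrightarrow> Ea1 i j k' \<in> F) \<Longrightarrow> last_a s F i j < k"
  unfolding last_a_def
  by (subst Max_less_iff) (auto simp: finite_nat_set_iff_bounded_le, meson leI)

lemma Ea1_in_F_if_last_a_less: "k \<in> {1..s} \<Longrightarrow> last_a s F i j < k \<Longrightarrow> Ea1 i j k \<in> F"
  unfolding last_a_def by (subst (asm) Max_less_iff) auto

lemma last_b_less:
  "1 \<le> j \<Longrightarrow> (\<forall>j'. j \<le> j' \<and> j' \<le> r*s \<longrightarrow> Eb1 i j' \<in> F) \<Longrightarrow> last_b r s F i < j"
  unfolding last_b_def
  by (subst Max_less_iff) (auto simp: finite_nat_set_iff_bounded_le, meson leI)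

lemma Eb1_in_F_if_last_b_less: "j \<in> {1..r*s} \<Longrightarrow> last_b r s F i < j \<Longrightarrow> Eb1 i j \<in> F"
  unfolding last_b_def by (subst (asm) Max_less_iff) auto

lemma b1grp_subset_if_reset_eq:
  assumes "i \<in> {1..n}" "reset n r s F = i"
  shows "b1grp r s i \<subseteq> F"
proof -
  let ?S = "{0} \<union> {i \<in> {1..n}. b1grp r s i \<subseteq> F \<and> \<not> a1_sq r s F i}"
  have "Max ?S \<in> ?S" by (rule Max_in) auto
  then show ?thesis using assms unfolding reset_def by auto
qed

lemma mem_edge_groups:
  "e \<in> a0grp t i j k \<longleftrightarrow> (\<exists>l. e = Ea0 i j k l \<and> l \<in> {1..t})"
  "e \<in> b1grp r s i \<longleftrightarrow> (\<exists>j. e = Eb1 i j \<and> j \<in> {1..r*s})"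
  "e \<in> b0grp t i j \<longleftrightarrow> (\<exists>l. e = Eb0 i j l \<and> l \<in> {1..t})"
  "e \<in> u1grp t i \<longleftrightarrow> (\<exists>l. e = Eu1 i l \<and> l \<in> {1..t})"
  "e \<in> u0grp t i \<longleftrightarrow> (\<exists>l. e = Eu0 i l \<and> l \<in> {1..t})"
  "e \<in> wgrp t i j \<longleftrightarrow> (\<exists>l. e = Ew i j l \<and> l \<in> {1..t})"
  "e \<in> w0grp t i \<longleftrightarrow> (\<exists>l. e = Ew0 i l \<and> l \<in> {1..t})"
  by (auto simp: a0grp_def b1grp_def b0grp_def u1grp_def u0grp_def wgrp_def w0grp_def)

lemmas BF_level_unfolded = BF_level_def a_part_def all_a0_def

lemma BF_level_subset:
  assumes "i \<in> {1..n}"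
  shows "BF_level n r s t F i \<subseteq> F"
proof -
  have "reset n r s F = i \<Longrightarrow> b1grp r s i \<subseteq> F"
    using b1grp_subset_if_reset_eq assms by blast
  then show ?thesis
    unfolding BF_level_unfolded using Ea1_in_F_if_last_a_less Eb1_in_F_if_last_b_less
    by (auto simp: mem_edge_groups split: if_splits)
qed

lemma BF_subset: "BF n r s t F \<subseteq> F"
  unfolding BF_def using BF_level_subset by blast

lemma level_src_BF_level: "e \<in> BF_level n r s t F i \<Longrightarrow> level n (src e) = i"
  unfolding BF_level_unfolded by (cases e) (auto simp: mem_edge_groups split: if_splits)

lemma BF_level_src: "e \<in> BF n r s t F \<Longrightarrow> e \<in> BF_level n r s t F (level n (src e))"
  unfolding BF_def using level_src_BF_level by blast

lemma BF_out_of_Bv: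
  assumes "e \<in> BF n r s t F" "src e = Bv i j" "reset n r s F \<le> i" "last_b r s F i < j"
  shows "e = Eb1 i j"
proof -
  have "e \<in> BF_level n r s t F i" using BF_level_src[OF assms(1)] assms(2) by simp
  with assms(2-4) show ?thesis
    unfolding BF_level_unfolded by (cases e) (auto simp: mem_edge_groups split: if_splits)
qed

lemma BF_out_of_A:
  assumes "e \<in> BF n r s t F" "src e = A i j k" "reset n r s F \<le> i" "b1grp r s i \<subseteq> F"
    "last_a s F i j < k"
  shows "e = Ea1 i j k"
proof -
  have "e \<in> BF_level n r s t F i" using BF_level_src[OF assms(1)] assms(2) by simp
  with assms(2-5) show ?thesis
    unfolding BF_level_unfolded by (cases e) (auto simp: mem_edge_groups split: if_splits)
qed

lemma BF_out_of_U:
  assumes "e \<in> BF n r s t F" "src e = U i" "reset n r s F < i"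
  shows "if b1grp r s i \<subseteq> F then e \<in> range (Eu1 i) else e \<in> range (Eu0 i)"
proof -
  have "e \<in> BF_level n r s t F i" using BF_level_src[OF assms(1)] assms(2) by simp
  with assms(2,3) show ?thesis
    unfolding BF_level_unfolded by (cases e) (auto simp: mem_edge_groups split: if_splits)
qed

lemma BF_out_of_W:
  assumes "e \<in> BF n r s t F" "src e = W i" "reset n r s F < i"
  shows "if b1grp r s i \<subseteq> F
         then \<exists>j l. e = Ew i j l \<and> j \<in> {1..r} \<and> a1grp s i j \<subseteq> F
         else e \<in> range (Ew0 i)"
proof -
  have "e \<in> BF_level n r s t F i" using BF_level_src[OF assms(1)] assms(2) by simp
  with assms(2,3) show ?thesis
    unfolding BF_level_unfolded by (cases e) (auto simp: mem_edge_groups split: if_splits)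
qed

lemma eps_nonneg: "0 \<le> eps r s"
  unfolding eps_def by simp

section \<open>Values of trees inside \<open>\<B>\<^sub>F\<close>\<close>

locale tree_in_BF =
  fixes n r s t :: nat and F B :: "edge set"
  assumes tree: "is_tree n r s t B" and B_subset_BF: "B \<subseteq> BF n r s t F"
    and r_pos: "1 \<le> r" and s_pos: "1 \<le> s"
begin

abbreviation y :: "vertex \<Rightarrow> real" where
  "y \<equiv> yB n r s B"

lemma out_edge:
  assumes "v \<in> Vset n r s - {T}"
  obtains e where "e \<in> BF n r s t F" "src e = v" "y v = cost r s e + y (tgt n r s e)"
  using is_tree_out_edge[OF tree assms] B_subset_BF yB_src[OF tree r_pos s_pos] by blast

lemma y_Bv_eq_y_wN:
  assumes i: "i \<in> {1..n}" "reset n r s F \<le> i"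
  shows "j \<in> {1..r*s} \<Longrightarrow> \<forall>j'. j \<le> j' \<and> j' \<le> r*s \<longrightarrow> Eb1 i j' \<in> F
    \<Longrightarrow> y (Bv i j) = y (wN n (Suc i))"
proof (induction j rule: measure_induct_rule[where f = "\<lambda>j. r*s - j"])
  case (less j)
  have "Bv i j \<in> Vset n r s - {T}" using less.prems i by (simp add: mem_Vset)
  then obtain e where e: "e \<in> BF n r s t F" "src e = Bv i j"
    "y (Bv i j) = cost r s e + y (tgt n r s e)" by (rule out_edge)
  have "e = Eb1 i j"
    using BF_out_of_Bv[OF e(1,2) i(2)] last_b_less less.prems by auto
  moreover have "j < r*s \<Longrightarrow> y (Bv i (Suc j)) = y (wN n (Suc i))"
    using less.IH[of "Suc j"] less.prems by auto
  ultimately show ?case using e(3) by (cases "j < r*s") auto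
qed

lemma y_Bv1_eq_y_wN:
  assumes "i \<in> {1..n}" "reset n r s F \<le> i" "b1grp r s i \<subseteq> F"
  shows "y (Bv i 1) = y (wN n (Suc i))"
  using y_Bv_eq_y_wN[OF assms(1,2), of 1] assms(3) r_pos s_pos unfolding b1grp_def by auto

lemma y_A_eq_y_wN:
  assumes i: "i \<in> {1..n}" "reset n r s F \<le> i" and b1: "b1grp r s i \<subseteq> F" and j: "j \<in> {1..r}"
  shows "k \<in> {1..s} \<Longrightarrow> \<forall>k'. k \<le> k' \<and> k' \<le> s \<longrightarrow> Ea1 i j k' \<in> F
    \<Longrightarrow> y (A i j k) = y (wN n (Suc i))"
proof (induction k rule: measure_induct_rule[where f = "\<lambda>k. s - k"])
  case (less k)
  have "A i j k \<in> Vset n r s - {T}" using less.prems i j by (simp add: mem_Vset)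
  then obtain e where e: "e \<in> BF n r s t F" "src e = A i j k"
    "y (A i j k) = cost r s e + y (tgt n r s e)" by (rule out_edge)
  have "e = Ea1 i j k"
    using BF_out_of_A[OF e(1,2) i(2) b1] last_a_less less.prems by auto
  moreover have "k < s \<Longrightarrow> y (A i j (Suc k)) = y (wN n (Suc i))"
    using less.IH[of "Suc k"] less.prems by auto
  moreover have "y (Bv i 1) = y (wN n (Suc i))" using y_Bv1_eq_y_wN i b1 .
  ultimately show ?case using e(3) by (cases "k < s") auto
qed

lemma y_W_eq_y_U:
  "reset n r s F < i \<Longrightarrow> i \<le> Suc n \<Longrightarrow> y (wN n i) = y (uN n i)"
proof (induction i rule: measure_induct_rule[where f = "\<lambda>i. Suc n - i"])
  case (less i)
  show ?case
  proof (cases "i = Suc n")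
    case True
    then show ?thesis by (simp add: uN_def wN_def)
  next
    case False
    then have i: "i \<in> {1..n}" "uN n i = U i" "wN n i = W i" "reset n r s F \<le> i"
      using less.prems by (auto simp: uN_def wN_def)
    have "U i \<in> Vset n r s - {T}" "W i \<in> Vset n r s - {T}" using i by (simp_all add: mem_Vset)
    then obtain eu ew where
      eu: "eu \<in> BF n r s t F" "src eu = U i" "y (U i) = cost r s eu + y (tgt n r s eu)" and
      ew: "ew \<in> BF n r s t F" "src ew = W i" "y (W i) = cost r s ew + y (tgt n r s ew)"
      by (metis out_edge)
    note eu_shape = BF_out_of_U[OF eu(1,2) less.prems(1)]
      and ew_shape = BF_out_of_W[OF ew(1,2) less.prems(1)]
    show ?thesis
    proof (cases "b1grp r s i \<subseteq> F")
      case True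
      then obtain j l where "ew = Ew i j l" "j \<in> {1..r}" "a1grp s i j \<subseteq> F"
        using ew_shape by auto
      then have "y (W i) = y (wN n (Suc i))"
        using ew(3) y_A_eq_y_wN[OF i(1,4) True, of j 1] s_pos unfolding a1grp_def by auto
      moreover have "y (U i) = y (wN n (Suc i))"
        using eu_shape True eu(3) y_Bv1_eq_y_wN[OF i(1,4) True] by auto
      ultimately show ?thesis using i by simp
    next
      case False
      then have "y (U i) = 2^(2*i) + y (uN n (Suc i))" "y (W i) = 2^(2*i) + y (wN n (Suc i))"
        using eu_shape ew_shape eu(3) ew(3) by auto
      moreover have "y (wN n (Suc i)) = y (uN n (Suc i))"
        using less.IH[of "Suc i"] less.prems \<open>i \<noteq> Suc n\<close> by auto
      ultimately show ?thesis using i by simp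
    qed
  qed
qed

lemma improving_Eb1:
  assumes i: "i \<in> {1..n}" and j: "j \<in> {1..r*s}" and not_in_F: "Eb1 i j \<notin> F"
    and later: "\<forall>j'. j < j' \<and> j' \<le> r*s \<longrightarrow> Eb1 i j' \<in> F" and reset: "reset n r s F \<le> i"
  shows "improving n r s t B (Eb1 i j)"
proof -
  have reset_less: "reset n r s F < i"
  proof (rule ccontr)
    assume "\<not> reset n r s F < i"
    then have "b1grp r s i \<subseteq> F" using reset i b1grp_subset_if_reset_eq by simp
    then show False using not_in_F j unfolding b1grp_def by auto
  qed
  have "Bv i j \<in> Vset n r s - {T}" using i j by (simp add: mem_Vset)
  then obtain e where e: "e \<in> BF n r s t F" "src e = Bv i j"
    "y (Bv i j) = cost r s e + y (tgt n r s e)" by (rule out_edge)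
  have "e \<in> F" using e(1) BF_subset by blast
  then obtain l where l: "e = Eb0 i j l" using e(2) not_in_F by (cases e) auto
  have "y (tgt n r s (Eb1 i j)) = y (wN n (Suc i))"
    using y_Bv_eq_y_wN[OF i reset, of "Suc j"] later by (cases "j < r*s") auto
  also have "\<dots> = y (uN n (Suc i))"
    using y_W_eq_y_U reset_less i by simp
  also have "\<dots> < y (Bv i j)"
    using e(3) l j eps_nonneg[of r s] by (simp add: add_pos_nonneg)
  finally show ?thesis
    unfolding improving_def using i j by (simp add: mem_Eset)
qed

lemma improving_Ea1:
  assumes i: "i \<in> {1..n}" and j: "j \<in> {1..r}" and k: "k \<in> {1..s}" and not_in_F: "Ea1 i j k \<notin> F"
    and later: "\<forall>k'. k < k' \<and> k' \<le> s \<longrightarrow> Ea1 i j k' \<in> F" and reset: "reset n r s F \<le> i"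
    and b1: "b1grp r s i \<subseteq> F"
  shows "improving n r s t B (Ea1 i j k)"
proof -
  have "A i j k \<in> Vset n r s - {T}" using i j k by (simp add: mem_Vset)
  then obtain e where e: "e \<in> BF n r s t F" "src e = A i j k"
    "y (A i j k) = cost r s e + y (tgt n r s e)" by (rule out_edge)
  have "e \<in> F" using e(1) BF_subset by blast
  then obtain l where l: "e = Ea0 i j k l" using e(2) not_in_F by (cases e) auto
  have "y (tgt n r s (Ea1 i j k)) = y (wN n (Suc i))"
    using y_A_eq_y_wN[OF i reset b1 j, of "Suc k"] y_Bv1_eq_y_wN[OF i reset b1] later
    by (cases "k < s") auto
  also have "\<dots> = y (uN n (Suc i))"
    using y_W_eq_y_U reset i by simp
  also have "\<dots> < y (A i j k)"
    using e(3) l k eps_nonneg[of r s] by (simp add: add_pos_nonneg)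
  finally show ?thesis
    unfolding improving_def using i j k by (simp add: mem_Eset)
qed

end

theorem mainTheorem6:
  fixes n r s t :: nat and F :: "edge set"
  assumes "functional n r s t F"
  shows "(\<forall>i j B. i \<in> {1..n} \<and> j \<in> {1..r*s} \<and> Eb1 i j \<notin> F
             \<and> (\<forall>j'. j < j' \<and> j' \<le> r*s \<longrightarrow> Eb1 i j' \<in> F)
             \<and> i \<ge> reset n r s F \<and> is_tree n r s t B \<and> B \<subseteq> BF n r s t F
             \<longrightarrow> improving n r s t B (Eb1 i j))
       \<and> (\<forall>i j k B. i \<in> {1..n} \<and> j \<in> {1..r} \<and> k \<in> {1..s} \<and> Ea1 i j k \<notin> F
             \<and> (\<forall>k'. k < k' \<and> k' \<le> s \<longrightarrow> Ea1 i j k' \<in> F)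
             \<and> i \<ge> reset n r s F \<and> b1grp r s i \<subseteq> F
             \<and> is_tree n r s t B \<and> B \<subseteq> BF n r s t F
             \<longrightarrow> improving n r s t B (Ea1 i j k))"
proof (intro conjI allI impI; elim conjE)
  fix i j B
  assume i: "i \<in> {1..n}" and j: "j \<in> {1..r*s}" and b1: "Eb1 i j \<notin> F"
    "\<forall>j'. j < j' \<and> j' \<le> r*s \<longrightarrow> Eb1 i j' \<in> F" "reset n r s F \<le> i"
    and tree: "is_tree n r s t B" "B \<subseteq> BF n r s t F"
  have "1 \<le> r \<and> 1 \<le> s" using j by (cases r; cases s) auto
  then interpret tree_in_BF n r s t F B using tree by unfold_locales auto
  show "improving n r s t B (Eb1 i j)" using i j b1 by (rule improving_Eb1)
next
  fix i j k B
  assume i: "i \<in> {1..n}" and j: "j \<in> {1..r}" and k: "k \<in> {1..s}" and a1: "Ea1 i j k \<notin> F"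
    "\<forall>k'. k < k' \<and> k' \<le> s \<longrightarrow> Ea1 i j k' \<in> F" "reset n r s F \<le> i" "b1grp r s i \<subseteq> F"
    and tree: "is_tree n r s t B" "B \<subseteq> BF n r s t F"
  interpret tree_in_BF n r s t F B using tree j k by unfold_locales auto
  show "improving n r s t B (Ea1 i j k)" using i j k a1 by (rule improving_Ea1)
qed

end
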